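(* Let $r\geq 1$, let $\mathbb R^r$ be endowed with the supremum norm $\|\cdot\|_\infty$, and let $|K|$ denote the Lebesgue measure of a Borel set $K\subset\mathbb R^r$. Let $J_r$ be the $r\times r$ matrix with $1$'s on the diagonal and on the superdiagonal and $0$'s elsewhere. Then there exist positive constants $C,C'$ (depending on $r$) such that for every $n\geq 2$, $$Cn^{-r(r-1)/2}\leq\bigl|\{x\in\mathbb R^r: \|J_r^kx\|_\infty\leq 1\text{ for }0\leq k<n\}\bigr|\leq C'n^{-r(r-1)/2}.$$ *)

theory Defs
  imports "HOL-Analysis.Analysis"
begin

text \<open>Vectors of R^r are represented as functions nat => real (only the
  components i < r matter); r x r matrices as functions nat => nat => real
  (only entries with i, j < r matter). Lebesgue measure on R^r is the
  product measure PiM {..<r} (\<lambda>_. lborel).\<close>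

definition Jmat :: "nat \<Rightarrow> nat \<Rightarrow> nat \<Rightarrow> real" where
  "Jmat r i j = (if i < r \<and> j < r \<and> (j = i \<or> j = Suc i) then 1 else 0)"

definition mat_mult :: "nat \<Rightarrow> (nat \<Rightarrow> nat \<Rightarrow> real) \<Rightarrow> (nat \<Rightarrow> nat \<Rightarrow> real) \<Rightarrow> nat \<Rightarrow> nat \<Rightarrow> real" where
  "mat_mult r A B i j = (\<Sum>l<r. A i l * B l j)"

definition mat_id :: "nat \<Rightarrow> nat \<Rightarrow> nat \<Rightarrow> real" where
  "mat_id r i j = (if i < r \<and> j < r \<and> i = j then 1 else 0)"

fun mat_pow :: "nat \<Rightarrow> (nat \<Rightarrow> nat \<Rightarrow> real) \<Rightarrow> nat \<Rightarrow> nat \<Rightarrow> nat \<Rightarrow> real" where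
  "mat_pow r A 0 = mat_id r"
| "mat_pow r A (Suc k) = mat_mult r (mat_pow r A k) A"

definition mat_vec :: "nat \<Rightarrow> (nat \<Rightarrow> nat \<Rightarrow> real) \<Rightarrow> (nat \<Rightarrow> real) \<Rightarrow> nat \<Rightarrow> real" where
  "mat_vec r A x i = (\<Sum>j<r. A i j * x j)"

definition sup_norm :: "nat \<Rightarrow> (nat \<Rightarrow> real) \<Rightarrow> real" where
  "sup_norm r x = Max ((\<lambda>i. \<bar>x i\<bar>) ` {..<r})"

end

theory Submission
  imports Defs
begin

text \<open>The set is squeezed between two boxes whose side in coordinate j is of order n^(-j),
  so its volume is of order n^(-(0 + 1 + ... + (r - 1))) = n^(-r(r-1)/2).
  Since (J^k x)_i = \<Sum>_l (k choose (l - i)) x_l and (k choose s) \<le> n^s, the box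
  |x_j| \<le> n^(-j)/r lies in the set. Conversely, for a step h the vector (J^h - I)^m x is an
  alternating sum of 2^m points of the orbit, hence has sup norm at most 2^m as long as m h < n,
  while its first coordinate is h^m x_m plus a combination of the x_l with l > m. Downward
  induction on m bounds h^m |x_m|, and the step h = n div r satisfies n \<le> 2 r h.\<close>

lemma mat_mult_Jmat_right:
  "mat_mult r A (Jmat r) i j =
     (if j < r then A i j + (if 0 < j then A i (j - 1) else 0) else 0)"
proof -
  have "mat_mult r A (Jmat r) i j
      = (\<Sum>l<r. (if l = j \<and> j < r then A i l else 0) + (if Suc l = j \<and> j < r then A i l else 0))"
    unfolding mat_mult_def by (rule sum.cong) (auto simp: Jmat_def)
  also have "\<dots> = (if j < r then A i j + (if 0 < j then A i (j - 1) else 0) else 0)"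
  proof (cases "0 < j \<and> j < r")
    case True
    then have "(\<Sum>l<r. if Suc l = j \<and> j < r then A i l else 0) = (\<Sum>l<r. if l = j - 1 then A i l else 0)"
      by (intro sum.cong) auto
    with True show ?thesis by (auto simp: sum.distrib)
  qed (auto simp: sum.distrib)
  finally show ?thesis .
qed

lemma mat_pow_Jmat:
  "mat_pow r (Jmat r) k i j = (if i < r \<and> j < r \<and> i \<le> j then real (k choose (j - i)) else 0)"
proof (induction k arbitrary: j)
  case 0
  then show ?case by (auto simp: mat_id_def)
next
  case (Suc k)
  have "mat_pow r (Jmat r) (Suc k) i j = (if j < r then mat_pow r (Jmat r) k i j
      + (if 0 < j then mat_pow r (Jmat r) k i (j - 1) else 0) else 0)"
    by (simp add: mat_mult_Jmat_right)
  also have "\<dots> = (if i < r \<and> j < r \<and> i \<le> j then real (Suc k choose (j - i)) else 0)"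
    unfolding Suc.IH by (cases "i < j") (auto simp: Suc_diff_Suc[symmetric])
  finally show ?case .
qed

text \<open>upper_toeplitz r f is the upper triangular Toeplitz matrix with entries f (j - i);
  products of such matrices correspond to convolution of their sequences, J^k has the sequence
  binom_seq k, and J^h - I has the sequence binom_diff h.\<close>

definition upper_toeplitz :: "nat \<Rightarrow> (nat \<Rightarrow> real) \<Rightarrow> (nat \<Rightarrow> real) \<Rightarrow> nat \<Rightarrow> real" where
  "upper_toeplitz r f v i = (\<Sum>l\<in>{i..<r}. f (l - i) * v l)"

definition conv :: "(nat \<Rightarrow> real) \<Rightarrow> (nat \<Rightarrow> real) \<Rightarrow> nat \<Rightarrow> real" where
  "conv f g s = (\<Sum>a\<le>s. f a * g (s - a))"

definition delta0 :: "nat \<Rightarrow> real" where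
  "delta0 s = (if s = 0 then 1 else 0)"

definition binom_seq :: "nat \<Rightarrow> nat \<Rightarrow> real" where
  "binom_seq k s = real (k choose s)"

lemma mat_vec_mat_pow_Jmat:
  assumes "i < r"
  shows "mat_vec r (mat_pow r (Jmat r) k) x i = upper_toeplitz r (binom_seq k) x i"
proof -
  have "mat_vec r (mat_pow r (Jmat r) k) x i = (\<Sum>j<r. if i \<le> j then binom_seq k (j - i) * x j else 0)"
    using assms by (auto simp: mat_vec_def mat_pow_Jmat binom_seq_def intro!: sum.cong)
  also have "\<dots> = (\<Sum>j\<in>{j \<in> {..<r}. i \<le> j}. binom_seq k (j - i) * x j)"
    by (rule sum.inter_filter[symmetric]) simp
  also have "{j \<in> {..<r}. i \<le> j} = {i..<r}" by auto
  finally show ?thesis by (simp add: upper_toeplitz_def)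
qed

lemma sum_upper_triangle_swap:
  fixes i r :: nat
  shows "(\<Sum>j\<in>{i..<r}. \<Sum>l\<in>{j..<r}. F j l) = (\<Sum>l\<in>{i..<r}. \<Sum>j\<in>{i..l}. F j l)"
proof -
  have "(\<Sum>j\<in>{i..<r}. \<Sum>l\<in>{j..<r}. F j l) = (\<Sum>j\<in>{i..<r}. \<Sum>l\<in>{l \<in> {i..<r}. j \<le> l}. F j l)"
    by (intro sum.cong refl arg_cong[where f = "sum _"]) (auto intro: order_trans)
  also have "\<dots> = (\<Sum>l\<in>{i..<r}. \<Sum>j\<in>{j \<in> {i..<r}. j \<le> l}. F j l)"
    by (rule sum.swap_restrict) auto
  also have "\<dots> = (\<Sum>l\<in>{i..<r}. \<Sum>j\<in>{i..l}. F j l)"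
    by (intro sum.cong refl arg_cong[where f = "sum _"]) auto
  finally show ?thesis .
qed

lemma upper_toeplitz_upper_toeplitz:
  "upper_toeplitz r f (upper_toeplitz r g v) i = upper_toeplitz r (conv f g) v i"
proof -
  have "upper_toeplitz r f (upper_toeplitz r g v) i
      = (\<Sum>j\<in>{i..<r}. \<Sum>l\<in>{j..<r}. f (j - i) * (g (l - j) * v l))"
    by (simp add: upper_toeplitz_def sum_distrib_left)
  also have "\<dots> = (\<Sum>l\<in>{i..<r}. \<Sum>j\<in>{i..l}. f (j - i) * (g (l - j) * v l))"
    by (rule sum_upper_triangle_swap)
  also have "\<dots> = (\<Sum>l\<in>{i..<r}. conv f g (l - i) * v l)"
  proof (rule sum.cong[OF refl])
    fix l assume "l \<in> {i..<r}"
    then have "conv f g (l - i) = (\<Sum>j\<in>{i..l}. f (j - i) * g (l - j))"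
      unfolding conv_def
      by (intro sum.reindex_bij_witness[where i = "\<lambda>j. j - i" and j = "\<lambda>a. i + a"]) auto
    then show "(\<Sum>j\<in>{i..l}. f (j - i) * (g (l - j) * v l)) = conv f g (l - i) * v l"
      by (simp add: sum_distrib_right mult.assoc)
  qed
  finally show ?thesis by (simp add: upper_toeplitz_def)
qed

lemma upper_toeplitz_delta0:
  assumes "i < r"
  shows "upper_toeplitz r delta0 v i = v i"
proof -
  have "upper_toeplitz r delta0 v i = (\<Sum>l\<in>{i..<r}. if l = i then v l else 0)"
    unfolding upper_toeplitz_def delta0_def by (intro sum.cong) auto
  with assms show ?thesis by simp
qed

lemma upper_toeplitz_diff:
  "upper_toeplitz r (\<lambda>s. f s - g s) v i = upper_toeplitz r f v i - upper_toeplitz r g v i"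
  by (simp add: upper_toeplitz_def sum_subtractf left_diff_distrib)

lemma conv_delta0_right: "conv f delta0 = f"
  by (simp add: fun_eq_iff conv_def delta0_def if_distrib sum.If_cases)

lemma binom_seq_0: "binom_seq 0 = delta0"
  by (auto simp: fun_eq_iff binom_seq_def delta0_def)

lemma conv_binom_seq: "conv (binom_seq k) (binom_seq h) = binom_seq (k + h)"
  by (simp add: fun_eq_iff conv_def binom_seq_def vandermonde flip: of_nat_mult of_nat_sum)

definition binom_diff :: "nat \<Rightarrow> nat \<Rightarrow> real" where
  "binom_diff h s = binom_seq h s - delta0 s"

lemma binom_diff_eq: "binom_diff h s = (if s = 0 then 0 else real (h choose s))"
  by (simp add: binom_diff_def binom_seq_def delta0_def)

lemma conv_binom_seq_binom_diff:
  "conv (binom_seq k) (binom_diff h) = (\<lambda>s. binom_seq (k + h) s - binom_seq k s)"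
  using conv_binom_seq[of k h] conv_delta0_right[of "binom_seq k"]
  by (simp add: fun_eq_iff conv_def binom_diff_def right_diff_distrib sum_subtractf)

fun conv_pow :: "(nat \<Rightarrow> real) \<Rightarrow> nat \<Rightarrow> nat \<Rightarrow> real" where
  "conv_pow f 0 = delta0"
| "conv_pow f (Suc m) = conv f (conv_pow f m)"

lemma finite_difference_bound:
  assumes bounded: "\<And>k i. k < n \<Longrightarrow> i < r \<Longrightarrow> \<bar>upper_toeplitz r (binom_seq k) x i\<bar> \<le> 1"
    and "k + m * h < n" "i < r"
  shows "\<bar>upper_toeplitz r (binom_seq k) (upper_toeplitz r (conv_pow (binom_diff h) m) x) i\<bar> \<le> 2 ^ m"
  using assms(2,3)
proof (induction m arbitrary: k)
  case 0
  then show ?case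
    using bounded by (simp add: upper_toeplitz_upper_toeplitz conv_delta0_right)
next
  \<comment> \<open>J^k (J^h - I) = J^(k+h) - J^k, so each factor J^h - I at most doubles the bound.\<close>
  case (Suc m)
  let ?y = "upper_toeplitz r (conv_pow (binom_diff h) m) x"
  have "upper_toeplitz r (conv_pow (binom_diff h) (Suc m)) x = upper_toeplitz r (binom_diff h) ?y"
    by (simp add: fun_eq_iff upper_toeplitz_upper_toeplitz)
  then have "upper_toeplitz r (binom_seq k) (upper_toeplitz r (conv_pow (binom_diff h) (Suc m)) x) i
      = upper_toeplitz r (binom_seq (k + h)) ?y i - upper_toeplitz r (binom_seq k) ?y i"
    by (simp add: upper_toeplitz_upper_toeplitz conv_binom_seq_binom_diff upper_toeplitz_diff)
  moreover have "\<bar>upper_toeplitz r (binom_seq (k + h)) ?y i\<bar> \<le> 2 ^ m"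
    using Suc by (intro Suc.IH) auto
  moreover have "\<bar>upper_toeplitz r (binom_seq k) ?y i\<bar> \<le> 2 ^ m"
    using Suc by (intro Suc.IH) auto
  ultimately show ?case by simp
qed

lemma abs_upper_toeplitz_conv_pow_binom_diff_le:
  assumes "\<And>k i. k < n \<Longrightarrow> i < r \<Longrightarrow> \<bar>upper_toeplitz r (binom_seq k) x i\<bar> \<le> 1"
    and "m * h < n" "i < r"
  shows "\<bar>upper_toeplitz r (conv_pow (binom_diff h) m) x i\<bar> \<le> 2 ^ m"
  using finite_difference_bound[OF assms(1), where k = 0 and m = m and h = h and i = i] assms(2,3)
  by (simp add: binom_seq_0 upper_toeplitz_delta0)

lemma conv_pow_nonneg: "(\<And>a. 0 \<le> f a) \<Longrightarrow> 0 \<le> conv_pow f m s"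
  by (induction m arbitrary: s) (auto simp: delta0_def conv_def intro!: sum_nonneg)

lemma conv_pow_eq_0:
  assumes "f 0 = 0" "s < m"
  shows "conv_pow f m s = 0"
  using assms(2)
proof (induction m arbitrary: s)
  case (Suc m)
  have "f a * conv_pow f m (s - a) = 0" if "a \<le> s" for a
    using Suc that assms(1) by (cases "a = 0") auto
  then show ?case by (auto simp: conv_def intro!: sum.neutral)
qed simp

lemma conv_pow_diag:
  assumes "f 0 = 0"
  shows "conv_pow f m m = f 1 ^ m"
proof (induction m)
  case (Suc m)
  have "f a * conv_pow f m (Suc m - a) = (if a = 1 then f 1 ^ Suc m else 0)" if "a \<le> Suc m" for a
    using Suc that assms by (cases "a = 0 \<or> a = 1") (auto simp: conv_pow_eq_0)
  then show ?case by (simp add: conv_def)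
qed (simp add: delta0_def)

lemma conv_pow_le:
  assumes nonneg: "\<And>a. 0 \<le> f a" and le: "\<And>a. f a \<le> B ^ a"
  shows "conv_pow f m s \<le> real (s + 1) ^ m * B ^ s"
proof (induction m arbitrary: s)
  case 0
  have "0 \<le> B ^ s" using nonneg[of s] le[of s] by linarith
  then show ?case by (simp add: delta0_def)
next
  case (Suc m)
  have "f a * conv_pow f m (s - a) \<le> real (s + 1) ^ m * B ^ s" if "a \<le> s" for a
  proof -
    have B: "0 \<le> B ^ b" for b using nonneg[of b] le[of b] by linarith
    have "f a * conv_pow f m (s - a) \<le> B ^ a * (real (s - a + 1) ^ m * B ^ (s - a))"
      by (intro mult_mono le Suc.IH conv_pow_nonneg nonneg B)
    also have "\<dots> \<le> B ^ a * (real (s + 1) ^ m * B ^ (s - a))"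
      by (intro mult_left_mono mult_right_mono power_mono B) auto
    also have "\<dots> = real (s + 1) ^ m * B ^ s"
      using that by (simp add: power_add[symmetric])
    finally show ?thesis .
  qed
  then have "conv_pow f (Suc m) s \<le> real (card {..s}) * (real (s + 1) ^ m * B ^ s)"
    unfolding conv_pow.simps conv_def by (intro sum_bounded_above) auto
  then show ?case by simp
qed

lemma binom_diff_nonneg: "0 \<le> binom_diff h a"
  by (simp add: binom_diff_eq)

lemma binom_seq_le_power: "binom_seq k s \<le> real k ^ s"
proof (cases "s \<le> k")
  case True
  then have "real (k choose s) \<le> real (k ^ s)"
    by (simp only: of_nat_le_iff binomial_le_pow)
  then show ?thesis by (simp add: binom_seq_def)
qed (simp add: binom_seq_def binomial_eq_0)

lemma binom_diff_le_power: "binom_diff h a \<le> real h ^ a"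
  using binom_seq_le_power[of h a] by (simp add: binom_diff_def delta0_def binom_seq_def)

lemma upper_toeplitz_conv_pow_0:
  assumes "f 0 = 0" "m < r"
  shows "upper_toeplitz r (conv_pow f m) x 0
    = f 1 ^ m * x m + (\<Sum>l\<in>{Suc m..<r}. conv_pow f m l * x l)"
proof -
  have "upper_toeplitz r (conv_pow f m) x 0
      = (\<Sum>l\<in>{0..<m}. conv_pow f m l * x l) + (\<Sum>l\<in>{m..<r}. conv_pow f m l * x l)"
    unfolding upper_toeplitz_def using assms(2) by (simp add: sum.atLeastLessThan_concat)
  also have "(\<Sum>l\<in>{0..<m}. conv_pow f m l * x l) = 0"
    using assms(1) by (simp add: conv_pow_eq_0)
  also have "(\<Sum>l\<in>{m..<r}. conv_pow f m l * x l)
      = f 1 ^ m * x m + (\<Sum>l\<in>{Suc m..<r}. conv_pow f m l * x l)"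
    using assms by (simp add: sum.atLeast_Suc_lessThan conv_pow_diag)
  finally show ?thesis by simp
qed

lemma abs_coord_scaled_le:
  assumes bounded: "\<And>k i. k < n \<Longrightarrow> i < r \<Longrightarrow> \<bar>upper_toeplitz r (binom_seq k) x i\<bar> \<le> 1"
    and "m * h < n" "m < r"
  shows "\<bar>x m\<bar> * real h ^ m \<le> 2 ^ m + (\<Sum>l\<in>{Suc m..<r}. real (l + 1) ^ m * (\<bar>x l\<bar> * real h ^ l))"
proof -
  let ?e = "conv_pow (binom_diff h) m"
  have "upper_toeplitz r ?e x 0 = real h ^ m * x m + (\<Sum>l\<in>{Suc m..<r}. ?e l * x l)"
    using upper_toeplitz_conv_pow_0[of "binom_diff h" m r x] assms(3) by (simp add: binom_diff_eq)
  then have "\<bar>x m\<bar> * real h ^ m \<le> \<bar>upper_toeplitz r ?e x 0\<bar> + \<bar>\<Sum>l\<in>{Suc m..<r}. ?e l * x l\<bar>"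
    by (simp add: abs_mult mult.commute[of "\<bar>x m\<bar>"])
  also have "\<dots> \<le> 2 ^ m + (\<Sum>l\<in>{Suc m..<r}. real (l + 1) ^ m * (\<bar>x l\<bar> * real h ^ l))"
  proof (rule add_mono)
    show "\<bar>upper_toeplitz r ?e x 0\<bar> \<le> 2 ^ m"
      using assms by (intro abs_upper_toeplitz_conv_pow_binom_diff_le[OF bounded]) auto
    have "\<bar>?e l * x l\<bar> \<le> real (l + 1) ^ m * (\<bar>x l\<bar> * real h ^ l)" for l
    proof -
      have "?e l \<le> real (l + 1) ^ m * real h ^ l"
        by (intro conv_pow_le binom_diff_nonneg binom_diff_le_power)
      from mult_right_mono[OF this abs_ge_zero[of "x l"]] show ?thesis
        by (simp add: abs_mult conv_pow_nonneg binom_diff_nonneg ac_simps)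
    qed
    then show "\<bar>\<Sum>l\<in>{Suc m..<r}. ?e l * x l\<bar>
        \<le> (\<Sum>l\<in>{Suc m..<r}. real (l + 1) ^ m * (\<bar>x l\<bar> * real h ^ l))"
      by (intro order.trans[OF sum_abs sum_mono])
  qed
  finally show ?thesis .
qed

lemma scaled_coord_bound:
  assumes bounded: "\<And>k i. k < n \<Longrightarrow> i < r \<Longrightarrow> \<bar>upper_toeplitz r (binom_seq k) x i\<bar> \<le> 1"
    and step: "(r - 1) * h < n"
    and "m < r"
  shows "\<bar>x m\<bar> * real h ^ m \<le> (real (r + 1) ^ (r + 1)) ^ (r - m)"
  using \<open>m < r\<close>
proof (induction m rule: measure_induct_rule[where f = "\<lambda>m. r - m"])
  case (less m)
  define R where "R = real (r + 1) ^ r"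
  define Q where "Q = real (r + 1) ^ (r + 1)"
  define P where "P = Q ^ (r - m - 1)"
  have R1: "1 \<le> R" and Q1: "1 \<le> Q"
    unfolding R_def Q_def by (intro one_le_power; simp)+
  have P1: "1 \<le> P" unfolding P_def using Q1 by (rule one_le_power)
  have R_ge: "real (l + 1) ^ m \<le> R" if "l < r" for l
    unfolding R_def using that less.prems by (intro order.trans[OF power_mono power_increasing]) auto
  have "m * h \<le> (r - 1) * h"
    using less.prems by (intro mult_le_mono1) simp
  with step have "m * h < n" by linarith
  then have "\<bar>x m\<bar> * real h ^ m
      \<le> 2 ^ m + (\<Sum>l\<in>{Suc m..<r}. real (l + 1) ^ m * (\<bar>x l\<bar> * real h ^ l))"
    using abs_coord_scaled_le[OF bounded _ less.prems] by blast
  also have "\<dots> \<le> R + real (card {Suc m..<r}) * (R * P)"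
  proof (rule add_mono)
    show "(2::real) ^ m \<le> R"
      unfolding R_def using less.prems by (intro order.trans[OF power_mono power_increasing]) auto
    have "\<bar>x l\<bar> * real h ^ l \<le> P" if "l \<in> {Suc m..<r}" for l
    proof -
      have "\<bar>x l\<bar> * real h ^ l \<le> Q ^ (r - l)"
        using less.IH[of l] that unfolding Q_def by auto
      also have "\<dots> \<le> P"
        unfolding P_def using that Q1 by (intro power_increasing) auto
      finally show ?thesis .
    qed
    then show "(\<Sum>l\<in>{Suc m..<r}. real (l + 1) ^ m * (\<bar>x l\<bar> * real h ^ l))
        \<le> real (card {Suc m..<r}) * (R * P)"
      using R_ge R1 by (intro sum_bounded_above mult_mono) auto
  qed
  also have "\<dots> \<le> R * P + real r * (R * P)"
    using R1 P1 mult_left_mono[OF P1, of R] by (intro add_mono mult_right_mono) auto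
  also have "\<dots> = Q * P"
    by (simp add: Q_def R_def algebra_simps)
  also have "\<dots> = Q ^ (r - m)"
    unfolding P_def using less.prems by (simp flip: power_Suc add: Suc_diff_Suc)
  finally show ?case unfolding Q_def .
qed

lemma div_step_bounds:
  fixes n r :: nat
  assumes "0 < r" "r \<le> n"
  shows "1 \<le> n div r" "(r - 1) * (n div r) < n" "n \<le> 2 * r * (n div r)"
proof -
  show h1: "1 \<le> n div r"
    using assms by (simp add: Suc_le_eq div_greater_zero_iff)
  have "r * (n div r) \<le> n" by simp
  moreover have "n div r \<le> r * (n div r)" using assms(1) by simp
  ultimately show "(r - 1) * (n div r) < n"
    using h1 unfolding diff_mult_distrib by linarith
  have "n = r * (n div r) + n mod r" by simp
  moreover have "n mod r < r" using assms(1) by simp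
  moreover have "r \<le> r * (n div r)" using h1 by simp
  ultimately show "n \<le> 2 * r * (n div r)" by linarith
qed

lemma coord_bound:
  assumes bounded: "\<And>k i. k < n \<Longrightarrow> i < r \<Longrightarrow> \<bar>upper_toeplitz r (binom_seq k) x i\<bar> \<le> 1"
    and "1 \<le> n" "m < r"
  shows "\<bar>x m\<bar> * real n ^ m \<le> (real (r + 1) ^ (r + 1)) ^ r * (2 * real r) ^ r"
proof -
  define Q where "Q = real (r + 1) ^ (r + 1)"
  define E where "E = (2 * real r) ^ r"
  have Q1: "1 \<le> Q" unfolding Q_def by (intro one_le_power) simp
  have E1: "1 \<le> E" unfolding E_def using \<open>m < r\<close> by (intro one_le_power) simp
  show ?thesis
  proof (cases "n < r")
    case True
    have "\<bar>x m\<bar> \<le> 1"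
      using bounded[of 0 m] assms(2,3) by (simp add: binom_seq_0 upper_toeplitz_delta0)
    moreover have "real n ^ m \<le> E"
      unfolding E_def using True assms(3) by (intro order.trans[OF power_mono power_increasing]) auto
    ultimately have "\<bar>x m\<bar> * real n ^ m \<le> 1 * E"
      by (intro mult_mono) auto
    also have "\<dots> \<le> Q ^ r * E" using one_le_power[OF Q1] E1 by simp
    finally show ?thesis unfolding Q_def E_def .
  next
    case False
    define h where "h = n div r"
    have "\<bar>x m\<bar> * real h ^ m \<le> Q ^ (r - m)"
      using scaled_coord_bound[OF bounded div_step_bounds(2)] False assms(3)
      unfolding Q_def h_def by simp
    also have "\<dots> \<le> Q ^ r" using Q1 by (intro power_increasing) auto
    finally have xh: "\<bar>x m\<bar> * real h ^ m \<le> Q ^ r" .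
    have "n \<le> 2 * r * h"
      using div_step_bounds(3) False assms(3) unfolding h_def by simp
    then have "real n \<le> 2 * real r * real h"
      by (metis of_nat_le_iff of_nat_mult of_nat_numeral)
    then have "real n ^ m \<le> (2 * real r * real h) ^ m"
      by (intro power_mono) auto
    also have "\<dots> = (2 * real r) ^ m * real h ^ m"
      by (simp only: power_mult_distrib)
    also have "\<dots> \<le> E * real h ^ m"
      unfolding E_def using assms(3) by (intro mult_right_mono power_increasing) auto
    finally have "\<bar>x m\<bar> * real n ^ m \<le> \<bar>x m\<bar> * (E * real h ^ m)"
      by (intro mult_left_mono) auto
    also have "\<dots> = E * (\<bar>x m\<bar> * real h ^ m)"
      by (simp only: mult.left_commute)
    also have "\<dots> \<le> E * Q ^ r" using xh E1 by (intro mult_left_mono) auto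
    finally show ?thesis unfolding Q_def E_def by (simp only: mult.commute)
  qed
qed

lemma emeasure_PiM_lborel_box:
  assumes "finite I" "\<And>j. j \<in> I \<Longrightarrow> a j \<le> b j"
  shows "emeasure (PiM I (\<lambda>_. lborel)) (PiE I (\<lambda>j. {a j .. b j})) = ennreal (\<Prod>j\<in>I. b j - a j)"
proof -
  interpret product_sigma_finite "\<lambda>_. lborel :: real measure" by standard
  have "emeasure (PiM I (\<lambda>_. lborel)) (PiE I (\<lambda>j. {a j .. b j})) = (\<Prod>j\<in>I. ennreal (b j - a j))"
    using assms by (simp add: emeasure_PiM)
  also have "\<dots> = ennreal (\<Prod>j\<in>I. b j - a j)"
    using assms by (intro prod_ennreal) auto
  finally show ?thesis .
qed

lemma measure_between_boxes:
  assumes "finite I" "S \<in> sets (PiM I (\<lambda>_. lborel))"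
    and "\<And>j. j \<in> I \<Longrightarrow> 0 \<le> a j" "\<And>j. j \<in> I \<Longrightarrow> a j \<le> b j"
    and "PiE I (\<lambda>j. {- a j .. a j}) \<subseteq> S" "S \<subseteq> PiE I (\<lambda>j. {- b j .. b j})"
  shows "(\<Prod>j\<in>I. 2 * a j) \<le> measure (PiM I (\<lambda>_. lborel)) S"
    and "measure (PiM I (\<lambda>_. lborel)) S \<le> (\<Prod>j\<in>I. 2 * b j)"
proof -
  let ?M = "PiM I (\<lambda>_. lborel :: real measure)"
  have box: "PiE I (\<lambda>j. {- c j .. c j}) \<in> fmeasurable ?M"
    and measure_box: "measure ?M (PiE I (\<lambda>j. {- c j .. c j})) = (\<Prod>j\<in>I. 2 * c j)"
    if "\<And>j. j \<in> I \<Longrightarrow> 0 \<le> c j" for c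
  proof -
    have "emeasure ?M (PiE I (\<lambda>j. {- c j .. c j})) = ennreal (\<Prod>j\<in>I. 2 * c j)"
      using emeasure_PiM_lborel_box[of I "\<lambda>j. - c j" c] assms(1) that by simp
    moreover have "0 \<le> (\<Prod>j\<in>I. 2 * c j)" using that by (simp add: prod_nonneg)
    moreover have "PiE I (\<lambda>j. {- c j .. c j}) \<in> sets ?M"
      by (intro sets_PiM_I_finite assms(1)) simp
    ultimately show "PiE I (\<lambda>j. {- c j .. c j}) \<in> fmeasurable ?M"
      and "measure ?M (PiE I (\<lambda>j. {- c j .. c j})) = (\<Prod>j\<in>I. 2 * c j)"
      by (simp_all add: fmeasurable_def measure_def)
  qed
  have b: "\<And>j. j \<in> I \<Longrightarrow> 0 \<le> b j" using assms(3,4) by (meson order.trans)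
  have S: "S \<in> fmeasurable ?M"
    using fmeasurableI2[OF box[OF b] assms(6,2)] .
  show "(\<Prod>j\<in>I. 2 * a j) \<le> measure ?M S"
    using measure_mono_fmeasurable[OF assms(5) fmeasurableD[OF box[OF assms(3)]] S]
    by (simp add: measure_box[OF assms(3)])
  show "measure ?M S \<le> (\<Prod>j\<in>I. 2 * b j)"
    using measure_mono_fmeasurable[OF assms(6,2) box[OF b]] by (simp add: measure_box[OF b])
qed

lemma sum_lessThan_real: "(\<Sum>j<r. real j) = real r * (real r - 1) / 2"
  by (induction r) (auto simp: field_simps)

lemma prod_lessThan_div_power:
  fixes x :: real
  assumes "0 < x"
  shows "(\<Prod>j<r. c / x ^ j) = c ^ r * x powr (- (real r * (real r - 1) / 2))"
proof -
  have "(\<Prod>j<r. x ^ j) = (\<Prod>j<r. x powr real j)"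
    using assms by (simp add: powr_realpow)
  also have "\<dots> = x powr (\<Sum>j<r. real j)"
    using assms by (simp only: powr_sum[symmetric])
  also have "\<dots> = x powr (real r * (real r - 1) / 2)"
    by (simp only: sum_lessThan_real)
  finally have "(\<Prod>j<r. c / x ^ j) = c ^ r / x powr (real r * (real r - 1) / 2)"
    by (simp add: prod_dividef)
  then show ?thesis
    by (simp only: powr_minus_divide) simp
qed

definition bounded_orbit :: "nat \<Rightarrow> nat \<Rightarrow> (nat \<Rightarrow> real) set" where
  "bounded_orbit r n = {x \<in> PiE {..<r} (\<lambda>_. UNIV).
     \<forall>k<n. \<forall>i<r. \<bar>upper_toeplitz r (binom_seq k) x i\<bar> \<le> 1}"

lemma sup_norm_le_iff: "0 < r \<Longrightarrow> sup_norm r v \<le> c \<longleftrightarrow> (\<forall>i<r. \<bar>v i\<bar> \<le> c)"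
  unfolding sup_norm_def by (subst Max_le_iff) auto

lemma bounded_orbit_eq:
  "0 < r \<Longrightarrow> {x \<in> PiE {..<r} (\<lambda>_. UNIV). \<forall>k<n. sup_norm r (mat_vec r (mat_pow r (Jmat r) k) x) \<le> 1}
     = bounded_orbit r n"
  by (auto simp: bounded_orbit_def sup_norm_le_iff mat_vec_mat_pow_Jmat)

lemma sets_bounded_orbit: "bounded_orbit r n \<in> sets (PiM {..<r} (\<lambda>_. lborel))"
proof -
  have [measurable]: "(\<lambda>x. upper_toeplitz r f x i) \<in> borel_measurable (PiM {..<r} (\<lambda>_. lborel))" for f i
    unfolding upper_toeplitz_def by measurable
  have "bounded_orbit r n = {x \<in> space (PiM {..<r} (\<lambda>_. lborel)).
      \<forall>k\<in>{..<n}. \<forall>i\<in>{..<r}. \<bar>upper_toeplitz r (binom_seq k) x i\<bar> \<le> 1}"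
    by (simp add: bounded_orbit_def space_PiM Ball_def)
  also have "\<dots> \<in> sets (PiM {..<r} (\<lambda>_. lborel))"
    by measurable
  finally show ?thesis .
qed

lemma box_subset_bounded_orbit:
  assumes "1 \<le> n"
  shows "PiE {..<r} (\<lambda>j. {- (1 / real r / real n ^ j) .. 1 / real r / real n ^ j})
    \<subseteq> bounded_orbit r n"
proof
  fix x assume x: "x \<in> PiE {..<r} (\<lambda>j. {- (1 / real r / real n ^ j) .. 1 / real r / real n ^ j})"
  have "\<bar>upper_toeplitz r (binom_seq k) x i\<bar> \<le> 1" if "k < n" "i < r" for k i
  proof -
    have "\<bar>binom_seq k (l - i) * x l\<bar> \<le> 1 / real r" if l: "l \<in> {i..<r}" for l
    proof -
      have "binom_seq k (l - i) \<le> real k ^ (l - i)"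
        by (rule binom_seq_le_power)
      also have "\<dots> \<le> real n ^ (l - i)"
        using \<open>k < n\<close> by (intro power_mono) auto
      also have "\<dots> \<le> real n ^ l"
        using assms by (intro power_increasing) auto
      finally have binom: "binom_seq k (l - i) \<le> real n ^ l" .
      have "\<bar>x l\<bar> \<le> 1 / real r / real n ^ l"
        using PiE_mem[OF x, of l] l by auto
      then have "binom_seq k (l - i) * \<bar>x l\<bar> \<le> real n ^ l * (1 / real r / real n ^ l)"
        using binom by (intro mult_mono) (auto simp: binom_seq_def)
      also have "\<dots> = 1 / real r" using assms by simp
      finally show ?thesis by (simp add: abs_mult binom_seq_def)
    qed
    then have "\<bar>upper_toeplitz r (binom_seq k) x i\<bar> \<le> real (card {i..<r}) * (1 / real r)"
      unfolding upper_toeplitz_def by (intro order.trans[OF sum_abs sum_bounded_above])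
    also have "\<dots> \<le> real r * (1 / real r)"
      by (intro mult_right_mono) auto
    finally show ?thesis using \<open>i < r\<close> by simp
  qed
  then show "x \<in> bounded_orbit r n"
    using x by (auto simp: bounded_orbit_def PiE_iff)
qed

lemma bounded_orbit_subset_box:
  fixes r n :: nat
  assumes "1 \<le> n"
  defines "D \<equiv> (real (r + 1) ^ (r + 1)) ^ r * (2 * real r) ^ r"
  shows "bounded_orbit r n \<subseteq> PiE {..<r} (\<lambda>j. {- (D / real n ^ j) .. D / real n ^ j})"
proof
  fix x assume x: "x \<in> bounded_orbit r n"
  then have bounded: "\<And>k i. k < n \<Longrightarrow> i < r \<Longrightarrow> \<bar>upper_toeplitz r (binom_seq k) x i\<bar> \<le> 1"
    by (simp add: bounded_orbit_def)
  have bound: "\<bar>x j\<bar> \<le> D / real n ^ j" if "j < r" for j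
  proof -
    have "\<bar>x j\<bar> * real n ^ j \<le> D"
      unfolding D_def by (rule coord_bound[OF bounded assms(1) that])
    then show ?thesis using assms(1) by (simp add: pos_le_divide_eq)
  qed
  show "x \<in> PiE {..<r} (\<lambda>j. {- (D / real n ^ j) .. D / real n ^ j})"
  proof (rule PiE_I)
    show "x j \<in> {- (D / real n ^ j) .. D / real n ^ j}" if "j \<in> {..<r}" for j
      using bound[of j] that by (simp add: abs_le_iff)
    show "x j = undefined" if "j \<notin> {..<r}" for j
      using x that by (auto simp: bounded_orbit_def PiE_iff extensional_def)
  qed
qed

lemma measure_bounded_orbit_bounds:
  fixes r n :: nat
  assumes "1 \<le> r" "1 \<le> n"
  defines "D \<equiv> (real (r + 1) ^ (r + 1)) ^ r * (2 * real r) ^ r"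
    and "e \<equiv> - (real r * (real r - 1) / 2)"
  shows "(2 / real r) ^ r * real n powr e \<le> measure (PiM {..<r} (\<lambda>_. lborel)) (bounded_orbit r n)"
    and "measure (PiM {..<r} (\<lambda>_. lborel)) (bounded_orbit r n) \<le> (2 * D) ^ r * real n powr e"
proof -
  define a where "a j = 1 / real r / real n ^ j" for j
  define b where "b j = D / real n ^ j" for j
  have "1 \<le> (real (r + 1) ^ (r + 1)) ^ r" "1 \<le> (2 * real r) ^ r"
    using assms(1) by (intro one_le_power; simp)+
  then have "1 \<le> D"
    unfolding D_def using mult_mono[of 1 _ 1] by fastforce
  moreover have "1 / real r \<le> 1" using assms(1) by simp
  ultimately have "a j \<le> b j" for j
    unfolding a_def b_def by (intro divide_right_mono) auto
  moreover have "0 \<le> a j" for j by (simp add: a_def)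
  ultimately have bounds: "(\<Prod>j<r. 2 * a j) \<le> measure (PiM {..<r} (\<lambda>_. lborel)) (bounded_orbit r n)"
      "measure (PiM {..<r} (\<lambda>_. lborel)) (bounded_orbit r n) \<le> (\<Prod>j<r. 2 * b j)"
    using measure_between_boxes[OF finite_lessThan sets_bounded_orbit, where a = a and b = b]
      box_subset_bounded_orbit[OF assms(2), of r]
      bounded_orbit_subset_box[OF assms(2), of r, folded D_def]
    unfolding a_def b_def by auto
  have "(\<Prod>j<r. 2 * a j) = (\<Prod>j<r. (2 / real r) / real n ^ j)"
    by (simp add: a_def)
  also have "\<dots> = (2 / real r) ^ r * real n powr e"
    unfolding e_def using assms(2) by (intro prod_lessThan_div_power) simp
  finally show "(2 / real r) ^ r * real n powr e \<le> measure (PiM {..<r} (\<lambda>_. lborel)) (bounded_orbit r n)"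
    using bounds(1) by simp
  have "(\<Prod>j<r. 2 * b j) = (\<Prod>j<r. (2 * D) / real n ^ j)"
    by (simp add: b_def)
  also have "\<dots> = (2 * D) ^ r * real n powr e"
    unfolding e_def using assms(2) by (intro prod_lessThan_div_power) simp
  finally show "measure (PiM {..<r} (\<lambda>_. lborel)) (bounded_orbit r n) \<le> (2 * D) ^ r * real n powr e"
    using bounds(2) by simp
qed

theorem corollaryB3:
  fixes r :: nat
  assumes "r \<ge> 1"
  shows "\<exists>C C'. C > 0 \<and> C' > 0 \<and>
    (\<forall>n::nat. n \<ge> 2 \<longrightarrow>
      C * real n powr (- (real r * (real r - 1) / 2))
        \<le> measure (PiM {..<r} (\<lambda>_. lborel))
             {x \<in> PiE {..<r} (\<lambda>_. UNIV).
                \<forall>k<n. sup_norm r (mat_vec r (mat_pow r (Jmat r) k) x) \<le> 1}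
      \<and> measure (PiM {..<r} (\<lambda>_. lborel))
             {x \<in> PiE {..<r} (\<lambda>_. UNIV).
                \<forall>k<n. sup_norm r (mat_vec r (mat_pow r (Jmat r) k) x) \<le> 1}
        \<le> C' * real n powr (- (real r * (real r - 1) / 2)))"
proof -
  have orbit: "{x \<in> PiE {..<r} (\<lambda>_. UNIV). \<forall>k<n. sup_norm r (mat_vec r (mat_pow r (Jmat r) k) x) \<le> 1}
      = bounded_orbit r n" for n
    using assms by (intro bounded_orbit_eq) simp
  show ?thesis
    unfolding orbit
    by (rule exI[of _ "(2 / real r) ^ r"],
        rule exI[of _ "(2 * ((real (r + 1) ^ (r + 1)) ^ r * (2 * real r) ^ r)) ^ r"])
      (use measure_bounded_orbit_bounds[OF assms] assms in auto)
qed

end
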